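(* Let $S\ge2$, $\mathcal S=\{1,\dots,S\}$ and $T=3$. The union of the following two sets of moves is a Markov basis for the toric homogeneous Markov chain model on $\mathcal S^3$. (1) Crossing path swappings: for paths $\omega=(s_1,s_2,s_3)$, $\omega'=(s'_1,s'_2,s'_3)$ with $s_t=s'_t$ for some $t$, the move $e_\omega+e_{\omega'}-e_{\tilde\omega}-e_{\tilde\omega'}$ with $\tilde\omega=(s_1,\dots,s_t,s'_{t+1},\dots,s'_3)$, $\tilde\omega'=(s'_1,\dots,s'_t,s_{t+1},\dots,s_3)$. (2) The moves $\bar{\mathbf z}=\sum_{\omega\in W_1}e_\omega-\sum_{\omega\in W_2}e_\omega$, for all $m=2,\dots,S$, all distinct $i_1,\dots,i_m\in\mathcal S$, all distinct $j_1,\dots,j_m\in\mathcal S$, and all choices of states $s_j\in\mathcal S$ ($j\in\mathcal I\setminus\mathcal J$) and $\tilde s_j\in\mathcal S$ ($j\in\mathcal J\setminus\mathcal I$), where $\mathcal I=\{i_1,\dots,i_m\}$, $\mathcal J=\{j_1,\dots,j_m\}$ and, with indices taken cyclically ($j_0:=j_m$, $i_{m+1}:=i_1$): for $j=j_l\in\mathcal J$ put $i(j)=i_l$ and $i'(j)=i_{l+1}$; for $j=i_l\in\mathcal I$ put $k(j)=j_{l-1}$ and $k'(j)=j_l$; $$W_1=\{(i(j),j,k(j)):j\in\mathcal I\cap\mathcal J\}\cup\{(s_j,j,k(j)):j\in\mathcal I\setminus\mathcal J\}\cup\{(i(j),j,\tilde s_j):j\in\mathcal J\setminus\mathcal I\},$$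 $$W_2=\{(i'(j),j,k'(j)):j\in\mathcal I\cap\mathcal J\}\cup\{(s_j,j,k'(j)):j\in\mathcal I\setminus\mathcal J\}\cup\{(i'(j),j,\tilde s_j):j\in\mathcal J\setminus\mathcal I\}.$$
   Context: Paths are elements of $\mathcal S^3$; a contingency table is a function $\mathbf x:\mathcal S^3\to\mathbb Z_{\ge0}$, and $e_\omega$ is the table with a single path $\omega$. The toric homogeneous Markov chain model has sufficient statistic $\mathbf b(\mathbf x)=A\mathbf x$ consisting of initial-state counts $x^1_i=\sum_{\omega:\omega_1=i}x(\omega)$ and total transition counts $x^+_{ij}=\sum_\omega x(\omega)\,\#\{t\in\{1,2\}:\omega_t=i,\omega_{t+1}=j\}$. The fiber of $\mathbf b$ is the set of nonnegative integer tables $\mathbf x$ with $A\mathbf x=\mathbf b$; a move is an integer $\mathbf z$ with $A\mathbf z=0$. A set $\mathcal B$ of moves is a Markov basis if for every $\mathbf b$ and $\mathbf x,\mathbf y$ in the fiber of $\mathbf b$ there are $\mathbf z_1,\dots,\mathbf z_K\in\mathcal B\cup(-\mathcal B)$ with $\mathbf y=\mathbf x+\sum_k\mathbf z_k$ and all partial sums $\mathbf x+\sum_{k\le h}\mathbf z_k\ge0$. *)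

theory Defs
  imports Main
begin

type_synonym path = "nat \<times> nat \<times> nat"
type_synonym table = "path \<Rightarrow> int"

definition states :: "nat \<Rightarrow> nat set" where
  "states S = {1..S}"

definition paths :: "nat \<Rightarrow> path set" where
  "paths S = states S \<times> states S \<times> states S"

definition is_table :: "nat \<Rightarrow> table \<Rightarrow> bool" where
  "is_table S x \<longleftrightarrow> (\<forall>w. w \<notin> paths S \<longrightarrow> x w = 0) \<and> (\<forall>w. x w \<ge> 0)"

definition unit_table :: "path \<Rightarrow> table" ("e") where
  "e w = (\<lambda>v. if v = w then 1 else 0)"

definition comp :: "path \<Rightarrow> nat \<Rightarrow> nat" where
  "comp w t = (if t = 1 then fst w else if t = 2 then fst (snd w) else snd (snd w))"

definition init_count :: "nat \<Rightarrow> table \<Rightarrow> nat \<Rightarrow> int" where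
  "init_count S x i = (\<Sum>w\<in>paths S. if comp w 1 = i then x w else 0)"

definition trans_count :: "nat \<Rightarrow> table \<Rightarrow> nat \<Rightarrow> nat \<Rightarrow> int" where
  "trans_count S x i j = (\<Sum>w\<in>paths S. x w *
      int (card {t \<in> {1,2::nat}. comp w t = i \<and> comp w (t+1) = j}))"

definition suff_stat :: "nat \<Rightarrow> table \<Rightarrow> (nat \<Rightarrow> int) \<times> (nat \<Rightarrow> nat \<Rightarrow> int)" where
  "suff_stat S x = ((\<lambda>i. if i \<in> states S then init_count S x i else 0),
                    (\<lambda>i j. if i \<in> states S \<and> j \<in> states S then trans_count S x i j else 0))"

definition is_move :: "nat \<Rightarrow> table \<Rightarrow> bool" where
  "is_move S z \<longleftrightarrow> (\<forall>w. w \<notin> paths S \<longrightarrow> z w = 0) \<and>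
      suff_stat S z = suff_stat S (\<lambda>_. 0)"

definition markov_basis :: "nat \<Rightarrow> table set \<Rightarrow> bool" where
  "markov_basis S B \<longleftrightarrow> (\<forall>z\<in>B. is_move S z) \<and>
    (\<forall>x y. is_table S x \<and> is_table S y \<and> suff_stat S x = suff_stat S y \<longrightarrow>
      (\<exists>zs :: table list.
         (\<forall>k<length zs. \<exists>z\<in>B. zs ! k = z \<or> zs ! k = (\<lambda>w. - z w)) \<and>
         (\<forall>w. y w = x w + (\<Sum>k<length zs. (zs ! k) w)) \<and>
         (\<forall>h\<le>length zs. \<forall>w. x w + (\<Sum>k<h. (zs ! k) w) \<ge> 0)))"

text \<open>(1) Crossing path swappings.  splice t w w' = (w_1..w_t, w'_{t+1}..w'_3).\<close>
definition splice :: "nat \<Rightarrow> path \<Rightarrow> path \<Rightarrow> path" where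
  "splice t w w' = (comp (if 1 \<le> t then w else w') 1,
                    comp (if 2 \<le> t then w else w') 2,
                    comp (if 3 \<le> t then w else w') 3)"

definition crossing_swaps :: "nat \<Rightarrow> table set" where
  "crossing_swaps S = {(\<lambda>v. e w v + e w' v - e (splice t w w') v - e (splice t w' w) v) | w w' t.
      w \<in> paths S \<and> w' \<in> paths S \<and> t \<in> {1,2,3} \<and> comp w t = comp w' t}"

definition nxt :: "nat \<Rightarrow> nat \<Rightarrow> nat" where "nxt m l = (if l = m then 1 else l + 1)"
definition prv :: "nat \<Rightarrow> nat \<Rightarrow> nat" where "prv m l = (if l = 1 then m else l - 1)"

definition W1 :: "nat \<Rightarrow> (nat \<Rightarrow> nat) \<Rightarrow> (nat \<Rightarrow> nat) \<Rightarrow> (nat \<Rightarrow> nat) \<Rightarrow> (nat \<Rightarrow> nat) \<Rightarrow> path set" where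
  "W1 m i j s st =
    (let I = i ` {1..m}; J = j ` {1..m};
         ii = (\<lambda>x. i (the_inv_into {1..m} j x));
         kk = (\<lambda>x. j (prv m (the_inv_into {1..m} i x)))
     in (\<lambda>x. (ii x, x, kk x)) ` (I \<inter> J) \<union> (\<lambda>x. (s x, x, kk x)) ` (I - J)
        \<union> (\<lambda>x. (ii x, x, st x)) ` (J - I))"

definition W2 :: "nat \<Rightarrow> (nat \<Rightarrow> nat) \<Rightarrow> (nat \<Rightarrow> nat) \<Rightarrow> (nat \<Rightarrow> nat) \<Rightarrow> (nat \<Rightarrow> nat) \<Rightarrow> path set" where
  "W2 m i j s st =
    (let I = i ` {1..m}; J = j ` {1..m};
         ii' = (\<lambda>x. i (nxt m (the_inv_into {1..m} j x)));
         kk' = (\<lambda>x. j (the_inv_into {1..m} i x))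
     in (\<lambda>x. (ii' x, x, kk' x)) ` (I \<inter> J) \<union> (\<lambda>x. (s x, x, kk' x)) ` (I - J)
        \<union> (\<lambda>x. (ii' x, x, st x)) ` (J - I))"

definition zbar :: "nat \<Rightarrow> (nat \<Rightarrow> nat) \<Rightarrow> (nat \<Rightarrow> nat) \<Rightarrow> (nat \<Rightarrow> nat) \<Rightarrow> (nat \<Rightarrow> nat) \<Rightarrow> table" where
  "zbar m i j s st = (\<lambda>v. (\<Sum>w\<in>W1 m i j s st. e w v) - (\<Sum>w\<in>W2 m i j s st. e w v))"

definition zbar_moves :: "nat \<Rightarrow> table set" where
  "zbar_moves S = {zbar m i j s st | m i j s st.
      2 \<le> m \<and> m \<le> S \<and>
      inj_on i {1..m} \<and> i ` {1..m} \<subseteq> states S \<and>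
      inj_on j {1..m} \<and> j ` {1..m} \<subseteq> states S \<and>
      s ` (i ` {1..m} - j ` {1..m}) \<subseteq> states S \<and>
      st ` (j ` {1..m} - i ` {1..m}) \<subseteq> states S}"

end

theory Submission
  imports Defs
begin

text \<open>For T = 3 the sufficient statistic of a table x is determined by the matrices
  marg12 x (a,b) = \<Sum>c x(a,b,c) of first transitions and marg23 x (b,c) = \<Sum>a x(a,b,c) of
  second transitions: it consists of the row sums of marg12 x and of marg12 x + marg23 x.

  Tables with the same two marginals differ only in how, for each middle state b, the
  first states are matched with the last states; these are two-way transportation tables,
  connected by the basic swaps, i.e. by crossing path swappings at t = 2.

  Otherwise D = marg12 x - marg12 y has zero row sums and, because the paths through b are
  counted both by column b of marg12 and by row b of marg23, zero column sums as well. So D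
  contains an alternating cycle i_1 j_1 i_2 j_2 ... i_m j_m with D(i_l,j_l) > 0 and
  D(i_(l+1),j_l) < 0. After rearranging x by swaps so that it contains the paths W_1 built on
  this cycle, subtracting z-bar keeps the statistic and moves marg12 x by -1 at the positive
  and +1 at the negative entries of the cycle, which strictly decreases
  \<Sum>|marg12 x - marg12 y|.\<close>

definition marg12 :: "nat \<Rightarrow> table \<Rightarrow> nat \<Rightarrow> nat \<Rightarrow> int" where
  "marg12 S x a b = (\<Sum>c\<in>states S. x (a,b,c))"

definition marg23 :: "nat \<Rightarrow> table \<Rightarrow> nat \<Rightarrow> nat \<Rightarrow> int" where
  "marg23 S x b c = (\<Sum>a\<in>states S. x (a,b,c))"

lemma finite_states [simp]: "finite (states S)"
  by (simp add: states_def)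

lemma finite_paths [simp]: "finite (paths S)"
  by (simp add: paths_def)

lemma mem_paths: "(a,b,c) \<in> paths S \<longleftrightarrow> a \<in> states S \<and> b \<in> states S \<and> c \<in> states S"
  by (simp add: paths_def)

lemma comp_Pair [simp]:
  "comp (a,b,c) 1 = a" "comp (a,b,c) (Suc 0) = a" "comp (a,b,c) 2 = b" "comp (a,b,c) 3 = c"
  by (auto simp: comp_def)

lemma sum_paths:
  "(\<Sum>w\<in>paths S. f w) = (\<Sum>a\<in>states S. \<Sum>b\<in>states S. \<Sum>c\<in>states S. f (a,b,c))"
  by (simp add: paths_def sum.cartesian_product case_prod_beta')

lemma sum_if_const:
  "(\<Sum>c\<in>C. if P then f c else 0) = (if P then sum f C else (0::'a::comm_monoid_add))"
  by simp

lemma init_count_marg12: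
  "a \<in> states S \<Longrightarrow> init_count S x a = (\<Sum>b\<in>states S. marg12 S x a b)"
  unfolding init_count_def sum_paths marg12_def by (simp add: sum_if_const)

lemma card_transitions:
  "int (card {t \<in> {1,2::nat}. comp (a,b,c) t = i \<and> comp (a,b,c) (t+1) = j})
   = (if a = i \<and> b = j then 1 else 0) + (if b = i \<and> c = j then 1 else 0)"
proof -
  have "{t \<in> {1,2::nat}. comp (a,b,c) t = i \<and> comp (a,b,c) (t+1) = j}
     = (if a = i \<and> b = j then {1} else {}) \<union> (if b = i \<and> c = j then {2} else {})"
    by (auto simp: comp_def)
  then show ?thesis by auto
qed

lemma trans_count_marg:
  assumes "i \<in> states S" "j \<in> states S"
  shows "trans_count S x i j = marg12 S x i j + marg23 S x i j"
proof -
  have "trans_count S x i j = (\<Sum>a\<in>states S. \<Sum>b\<in>states S. \<Sum>c\<in>states S.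
      (if a = i then if b = j then x (a,b,c) else 0 else 0))
    + (\<Sum>a\<in>states S. \<Sum>b\<in>states S. \<Sum>c\<in>states S.
      (if b = i then if c = j then x (a,b,c) else 0 else 0))"
    unfolding trans_count_def sum_paths card_transitions sum.distrib[symmetric]
    by (intro sum.cong refl) (auto simp: distrib_left)
  then show ?thesis
    using assms by (simp add: marg12_def marg23_def sum_if_const)
qed

lemma suff_stat_eq_iff:
  "suff_stat S x = suff_stat S y \<longleftrightarrow>
    (\<forall>a\<in>states S. (\<Sum>b\<in>states S. marg12 S x a b) = (\<Sum>b\<in>states S. marg12 S y a b)) \<and>
    (\<forall>a\<in>states S. \<forall>b\<in>states S. marg12 S x a b + marg23 S x a b = marg12 S y a b + marg23 S y a b)"
  by (auto simp: suff_stat_def fun_eq_iff init_count_marg12 trans_count_marg)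

lemma is_moveI:
  assumes "\<And>w. w \<notin> paths S \<Longrightarrow> z w = 0"
    and "\<And>a. a \<in> states S \<Longrightarrow> (\<Sum>b\<in>states S. marg12 S z a b) = 0"
    and "\<And>a b. a \<in> states S \<Longrightarrow> b \<in> states S \<Longrightarrow> marg12 S z a b + marg23 S z a b = 0"
  shows "is_move S z"
  using assms unfolding is_move_def suff_stat_eq_iff by (simp add: marg12_def marg23_def)

lemma marg12_add: "marg12 S (\<lambda>v. x v + z v) a b = marg12 S x a b + marg12 S z a b"
  by (simp add: marg12_def sum.distrib)

lemma marg23_add: "marg23 S (\<lambda>v. x v + z v) b c = marg23 S x b c + marg23 S z b c"
  by (simp add: marg23_def sum.distrib)

lemma marg12_diff: "marg12 S (\<lambda>v. x v - z v) a b = marg12 S x a b - marg12 S z a b"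
  by (simp add: marg12_def sum_subtractf)

lemma marg23_diff: "marg23 S (\<lambda>v. x v - z v) b c = marg23 S x b c - marg23 S z b c"
  by (simp add: marg23_def sum_subtractf)

lemma marg12_nonneg: "is_table S x \<Longrightarrow> marg12 S x a b \<ge> 0"
  by (simp add: marg12_def is_table_def sum_nonneg)

lemma marg23_nonneg: "is_table S x \<Longrightarrow> marg23 S x b c \<ge> 0"
  by (simp add: marg23_def is_table_def sum_nonneg)

lemma marg12_unit: "marg12 S (e (a',b',c')) a b = (if a = a' \<and> b = b' \<and> c' \<in> states S then 1 else 0)"
  by (auto simp: marg12_def unit_table_def intro!: sum.neutral)

lemma marg23_unit: "marg23 S (e (a',b',c')) b c = (if b = b' \<and> c = c' \<and> a' \<in> states S then 1 else 0)"
  by (auto simp: marg23_def unit_table_def intro!: sum.neutral)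

lemma sum_marg12_eq_sum_marg23: "(\<Sum>a\<in>states S. marg12 S x a b) = (\<Sum>c\<in>states S. marg23 S x b c)"
  unfolding marg12_def marg23_def by (rule sum.swap)

inductive reachable :: "table set \<Rightarrow> table \<Rightarrow> table \<Rightarrow> bool" for B where
  reachable_refl: "\<forall>w. x w \<ge> 0 \<Longrightarrow> reachable B x x"
| reachable_step: "reachable B x y \<Longrightarrow> z \<in> B \<Longrightarrow> d = z \<or> d = (\<lambda>w. - z w) \<Longrightarrow>
    \<forall>w. y w + d w \<ge> 0 \<Longrightarrow> reachable B x (\<lambda>w. y w + d w)"

lemma reachable_single:
  "z \<in> B \<Longrightarrow> d = z \<or> d = (\<lambda>w. - z w) \<Longrightarrow> \<forall>w. x w \<ge> 0 \<Longrightarrow> \<forall>w. x w + d w \<ge> 0 \<Longrightarrow>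
    reachable B x (\<lambda>w. x w + d w)"
  using reachable_step[OF reachable_refl] by blast

lemma reachable_trans: "reachable B y u \<Longrightarrow> reachable B x y \<Longrightarrow> reachable B x u"
  by (induction rule: reachable.induct) (auto intro: reachable_step)

lemma reachable_imp_walk:
  assumes "reachable B x y"
  shows "\<exists>zs :: table list.
    (\<forall>k<length zs. \<exists>z\<in>B. zs ! k = z \<or> zs ! k = (\<lambda>w. - z w)) \<and>
    (\<forall>w. y w = x w + (\<Sum>k<length zs. (zs ! k) w)) \<and>
    (\<forall>h\<le>length zs. \<forall>w. x w + (\<Sum>k<h. (zs ! k) w) \<ge> 0)"
  using assms
proof (induction rule: reachable.induct)
  case (reachable_refl x)
  then show ?case by (intro exI[of _ "[]"]) simp
next
  case (reachable_step x y z d)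
  then obtain zs where zs: "\<forall>k<length zs. \<exists>z\<in>B. zs ! k = z \<or> zs ! k = (\<lambda>w. - z w)"
    "\<forall>w. y w = x w + (\<Sum>k<length zs. (zs ! k) w)"
    "\<forall>h\<le>length zs. \<forall>w. x w + (\<Sum>k<h. (zs ! k) w) \<ge> 0"
    by blast
  have prefix: "(\<Sum>k<h. ((zs @ [d]) ! k) w) = (\<Sum>k<h. (zs ! k) w)" if "h \<le> length zs" for h w
    using that by (intro sum.cong) (auto simp: nth_append)
  have total: "(\<Sum>k<length (zs @ [d]). ((zs @ [d]) ! k) w) = (\<Sum>k<length zs. (zs ! k) w) + d w" for w
    using prefix[of "length zs" w] by simp
  show ?case
  proof (intro exI[of _ "zs @ [d]"] conjI allI impI)
    fix k assume "k < length (zs @ [d])"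
    then show "\<exists>z\<in>B. (zs @ [d]) ! k = z \<or> (zs @ [d]) ! k = (\<lambda>w. - z w)"
      using zs(1) reachable_step.hyps(2,3) by (cases "k < length zs") (auto simp: nth_append)
  next
    fix w show "y w + d w = x w + (\<Sum>k<length (zs @ [d]). ((zs @ [d]) ! k) w)"
      using zs(2)[rule_format, of w] total[of w] by simp
  next
    fix h w assume "h \<le> length (zs @ [d])"
    then consider "h \<le> length zs" | "h = length (zs @ [d])" by fastforce
    then show "x w + (\<Sum>k<h. ((zs @ [d]) ! k) w) \<ge> 0"
    proof cases
      case 1
      then show ?thesis using prefix[OF 1, of w] zs(3)[rule_format, OF 1, of w] by simp
    next
      case 2
      then show ?thesis
        using total[of w] zs(2)[rule_format, of w] reachable_step.hyps(4)[rule_format, of w] by simp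
    qed
  qed
qed

definition swap :: "nat \<Rightarrow> nat \<Rightarrow> nat \<Rightarrow> nat \<Rightarrow> nat \<Rightarrow> table" where
  "swap a a' b c c' = (\<lambda>v. e (a,b,c) v + e (a',b,c') v - e (a,b,c') v - e (a',b,c) v)"

lemma swap_in_crossing_swaps:
  assumes "(a,b,c) \<in> paths S" "(a',b,c') \<in> paths S"
  shows "swap a a' b c c' \<in> crossing_swaps S"
proof -
  have "splice 2 (a,b,c) (a',b,c') = (a,b,c')" "splice 2 (a',b,c') (a,b,c) = (a',b,c)"
    by (auto simp: splice_def comp_def)
  then show ?thesis
    unfolding crossing_swaps_def swap_def using assms
    by (intro CollectI exI[of _ "(a,b,c)"] exI[of _ "(a',b,c')"] exI[of _ 2]) simp
qed

lemma marg12_swap: "c \<in> states S \<Longrightarrow> c' \<in> states S \<Longrightarrow> marg12 S (swap a a' b c c') x y = 0"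
  by (simp add: swap_def marg12_diff marg12_add marg12_unit)

lemma marg23_swap: "a \<in> states S \<Longrightarrow> a' \<in> states S \<Longrightarrow> marg23 S (swap a a' b c c') x y = 0"
  by (simp add: swap_def marg23_diff marg23_add marg23_unit)

lemma swap_is_move:
  assumes "(a,b,c) \<in> paths S" "(a',b,c') \<in> paths S"
  shows "is_move S (swap a a' b c c')"
proof (rule is_moveI)
  show "w \<notin> paths S \<Longrightarrow> swap a a' b c c' w = 0" for w
    using assms by (auto simp: swap_def unit_table_def mem_paths)
qed (use assms in \<open>simp_all add: mem_paths marg12_swap marg23_swap\<close>)

lemma crossing_swap_is_move:
  assumes "z \<in> crossing_swaps S"
  shows "is_move S z"
proof -
  obtain w w' t where z: "z = (\<lambda>v. e w v + e w' v - e (splice t w w') v - e (splice t w' w) v)"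
    and w: "w \<in> paths S" "w' \<in> paths S" and t: "t \<in> {1,2,3}" and ct: "comp w t = comp w' t"
    using assms unfolding crossing_swaps_def by blast
  obtain a b c a' b' c' where ww: "w = (a,b,c)" "w' = (a',b',c')" by (cases w, cases w') auto
  from t consider "t = 1 \<or> t = 3" | "t = 2" by auto
  then show ?thesis
  proof cases
    case 1
    then have "z = (\<lambda>_. 0)" using ct unfolding z ww by (auto simp: splice_def comp_def)
    then show ?thesis by (auto intro: is_moveI simp: marg12_def marg23_def)
  next
    case 2
    then have "b' = b" "z = swap a a' b c c'"
      using ct unfolding z ww swap_def by (auto simp: splice_def comp_def)
    then show ?thesis using swap_is_move w ww by simp
  qed
qed

lemma sum_eq_imp_ex_less:
  fixes f g :: "'a \<Rightarrow> 'b::linordered_ab_group_add"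
  assumes "finite A" "sum f A = sum g A" "a \<in> A" "g a < f a"
  shows "\<exists>c\<in>A. f c < g c"
proof (rule ccontr)
  assume "\<not> ?thesis"
  then have "sum g A < sum f A" using assms by (intro sum_strict_mono_ex1) (auto simp: not_less)
  then show False using assms by simp
qed

text \<open>The swap removes one unit of excess at (a,b,c) and (a',b,c') and one unit of deficit
  at (a,b,c'), at the cost of at most one unit at (a',b,c).\<close>
lemma swap_decreases_distance:
  fixes x y :: table
  assumes paths: "(a,b,c) \<in> paths S" "(a',b,c') \<in> paths S"
    and signs: "y (a,b,c) < x (a,b,c)" "x (a,b,c') < y (a,b,c')" "y (a',b,c') < x (a',b,c')"
  shows "(\<Sum>v\<in>paths S. \<bar>x v + swap a a' b c' c v - y v\<bar>) + 2 \<le> (\<Sum>v\<in>paths S. \<bar>x v - y v\<bar>)"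
proof -
  have ne: "a \<noteq> a'" "c \<noteq> c'" using signs by auto
  define h where "h v = e (a',b,c) v - e (a,b,c) v - e (a',b,c') v - e (a,b,c') v" for v
  have pointwise: "\<bar>x v + swap a a' b c' c v - y v\<bar> \<le> \<bar>x v - y v\<bar> + h v" for v
    using signs ne unfolding swap_def h_def unit_table_def
    by (cases "v = (a,b,c)"; cases "v = (a',b,c)"; cases "v = (a,b,c')"; cases "v = (a',b,c')") auto
  have "(\<Sum>v\<in>paths S. h v) = -2"
    using paths ne unfolding h_def by (simp add: sum_subtractf unit_table_def mem_paths)
  moreover have "(\<Sum>v\<in>paths S. \<bar>x v + swap a a' b c' c v - y v\<bar>) \<le> (\<Sum>v\<in>paths S. \<bar>x v - y v\<bar> + h v)"
    by (rule sum_mono) (rule pointwise)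
  ultimately show ?thesis by (simp add: sum.distrib)
qed

lemma reachable_if_same_marginals:
  assumes "crossing_swaps S \<subseteq> B" "is_table S x" "is_table S y"
    and "\<forall>a\<in>states S. \<forall>b\<in>states S. marg12 S x a b = marg12 S y a b"
    and "\<forall>b\<in>states S. \<forall>c\<in>states S. marg23 S x b c = marg23 S y b c"
  shows "reachable B x y"
  using assms(2-)
proof (induction "nat (\<Sum>v\<in>paths S. \<bar>x v - y v\<bar>)" arbitrary: x rule: less_induct)
  case less
  note tx = less.prems(1) and ty = less.prems(2) and P = less.prems(3) and Q = less.prems(4)
  have x0: "\<forall>w. x w \<ge> 0" and y0: "\<forall>w. y w \<ge> 0" using tx ty by (auto simp: is_table_def)
  show ?case
  proof (cases "\<forall>w\<in>paths S. x w = y w")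
    case True
    then have "x = y" using tx ty unfolding is_table_def by (metis ext)
    then show ?thesis using x0 by (simp add: reachable_refl)
  next
    case False
    have "(\<Sum>w\<in>paths S. y w) = (\<Sum>w\<in>paths S. x w)"
      using P by (simp add: sum_paths marg12_def)
    then obtain w where "w \<in> paths S" "y w < x w"
      using False sum_eq_imp_ex_less[of "paths S" "\<lambda>w. y w" "\<lambda>w. x w"] by force
    then obtain a b c where abc: "(a,b,c) \<in> paths S" "y (a,b,c) < x (a,b,c)"
      by (cases w) auto
    then have st: "a \<in> states S" "b \<in> states S" "c \<in> states S" by (auto simp: mem_paths)
    obtain c' where c': "c' \<in> states S" "x (a,b,c') < y (a,b,c')"
      using sum_eq_imp_ex_less[of "states S" "\<lambda>c. x (a,b,c)" "\<lambda>c. y (a,b,c)" c] P st abc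
      by (auto simp: marg12_def)
    obtain a' where a': "a' \<in> states S" "y (a',b,c') < x (a',b,c')"
      using sum_eq_imp_ex_less[of "states S" "\<lambda>a. y (a,b,c')" "\<lambda>a. x (a,b,c')" a] Q st c'
      by (auto simp: marg23_def)
    define z where "z = swap a a' b c' c"
    define x1 where "x1 v = x v + z v" for v
    have paths: "(a,b,c') \<in> paths S" "(a',b,c) \<in> paths S" using st a' c' by (auto simp: mem_paths)
    have x10: "\<forall>v. x1 v \<ge> 0"
    proof
      fix v
      have "x (a,b,c) \<ge> 1" "x (a',b,c') \<ge> 1"
        using abc(2) a'(2) y0[rule_format, of "(a,b,c)"] y0[rule_format, of "(a',b,c')"] by linarith+
      moreover have "a \<noteq> a'" "c \<noteq> c'" using abc c' a' by auto
      ultimately show "x1 v \<ge> 0"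
        using x0[rule_format, of v] unfolding x1_def z_def swap_def unit_table_def by auto
    qed
    have tx1: "is_table S x1"
      using tx x10 swap_is_move[OF paths] unfolding is_table_def is_move_def x1_def z_def by auto
    have P1: "\<forall>a\<in>states S. \<forall>b\<in>states S. marg12 S x1 a b = marg12 S y a b"
      using P st c' unfolding x1_def z_def marg12_add by (simp add: marg12_swap)
    have Q1: "\<forall>b\<in>states S. \<forall>c\<in>states S. marg23 S x1 b c = marg23 S y b c"
      using Q st a' unfolding x1_def z_def marg23_add by (simp add: marg23_swap)
    have "(\<Sum>v\<in>paths S. \<bar>x1 v - y v\<bar>) + 2 \<le> (\<Sum>v\<in>paths S. \<bar>x v - y v\<bar>)"
      unfolding x1_def z_def using swap_decreases_distance[OF _ _ abc(2) c'(2) a'(2)] abc(1) paths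
      by (simp add: mem_paths)
    moreover have "(\<Sum>v\<in>paths S. \<bar>x1 v - y v\<bar>) \<ge> 0" by (simp add: sum_nonneg)
    ultimately have "nat (\<Sum>v\<in>paths S. \<bar>x1 v - y v\<bar>) < nat (\<Sum>v\<in>paths S. \<bar>x v - y v\<bar>)"
      by linarith
    then have "reachable B x1 y" by (rule less.hyps[OF _ tx1 ty P1 Q1])
    moreover have "z \<in> B" using assms(1) swap_in_crossing_swaps[OF paths] unfolding z_def by blast
    then have "reachable B x x1" using reachable_single[OF _ _ x0] x10 unfolding x1_def by simp
    ultimately show ?thesis by (rule reachable_trans)
  qed
qed

lemma nonneg_int_matrix_with_margins:
  fixes r :: "'a \<Rightarrow> int" and s :: "'b \<Rightarrow> int"
  assumes A: "finite A" and C: "finite C"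
    and "\<forall>a\<in>A. r a \<ge> 0" "\<forall>c\<in>C. s c \<ge> 0" "sum r A = sum s C"
  shows "\<exists>M. (\<forall>a c. M a c \<ge> 0) \<and> (\<forall>a\<in>A. (\<Sum>c\<in>C. M a c) = r a) \<and> (\<forall>c\<in>C. (\<Sum>a\<in>A. M a c) = s c)"
  using assms(3-)
proof (induction "nat (sum r A)" arbitrary: r s rule: less_induct)
  case less
  show ?case
  proof (cases "sum r A = 0")
    case True
    then have "\<forall>a\<in>A. r a = 0" "\<forall>c\<in>C. s c = 0"
      using less.prems A C by (simp_all add: sum_nonneg_eq_0_iff)
    then show ?thesis by (intro exI[of _ "\<lambda>_ _. 0"]) simp
  next
    case False
    then have pos: "sum r A > 0" "sum s C > 0"
      using less.prems sum_nonneg[of A r] by auto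
    obtain a where a: "a \<in> A" "r a > 0"
      using pos(1) sum_nonpos[of A r] by (meson not_le)
    obtain c where c: "c \<in> C" "s c > 0"
      using pos(2) sum_nonpos[of C s] by (meson not_le)
    define r' where "r' x = r x - (if x = a then 1 else 0)" for x
    define s' where "s' y = s y - (if y = c then 1 else 0)" for y
    have "sum r' A = sum r A - 1" "sum s' C = sum s C - 1"
      unfolding r'_def s'_def using a c A C by (simp_all add: sum_subtractf)
    moreover have "\<forall>x\<in>A. r' x \<ge> 0" "\<forall>y\<in>C. s' y \<ge> 0"
      using less.prems a c unfolding r'_def s'_def by auto
    ultimately obtain M where M: "\<forall>x y. M x y \<ge> 0" "\<forall>x\<in>A. (\<Sum>y\<in>C. M x y) = r' x"
      "\<forall>y\<in>C. (\<Sum>x\<in>A. M x y) = s' y"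
      using less.hyps[of r' s'] less.prems pos by auto
    show ?thesis
    proof (intro exI[of _ "\<lambda>x y. M x y + (if x = a \<and> y = c then 1 else 0)"] conjI ballI allI)
      show "\<And>x y. M x y + (if x = a \<and> y = c then 1 else 0) \<ge> 0" using M(1) by simp
      show "(\<Sum>y\<in>C. M x y + (if x = a \<and> y = c then 1 else 0)) = r x" if "x \<in> A" for x
        using M(2) that c C unfolding r'_def by (simp add: sum.distrib)
      show "(\<Sum>x\<in>A. M x y + (if x = a \<and> y = c then 1 else 0)) = s y" if "y \<in> C" for y
        using M(3) that a A unfolding s'_def by (simp add: sum.distrib)
    qed
  qed
qed

text \<open>For each middle state b the paths through b form a transportation table with margins
  P(-,b) and Q(b,-).\<close>
lemma table_with_marginals:
  fixes P Q :: "nat \<Rightarrow> nat \<Rightarrow> int"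
  assumes "\<forall>a\<in>states S. \<forall>b\<in>states S. P a b \<ge> 0" "\<forall>b\<in>states S. \<forall>c\<in>states S. Q b c \<ge> 0"
    and "\<forall>b\<in>states S. (\<Sum>a\<in>states S. P a b) = (\<Sum>c\<in>states S. Q b c)"
  shows "\<exists>x. is_table S x \<and> (\<forall>a\<in>states S. \<forall>b\<in>states S. marg12 S x a b = P a b)
     \<and> (\<forall>b\<in>states S. \<forall>c\<in>states S. marg23 S x b c = Q b c)"
proof -
  have "\<forall>b\<in>states S. \<exists>M. (\<forall>a c. M a c \<ge> 0) \<and> (\<forall>a\<in>states S. (\<Sum>c\<in>states S. M a c) = P a b)
           \<and> (\<forall>c\<in>states S. (\<Sum>a\<in>states S. M a c) = Q b c)"
    using nonneg_int_matrix_with_margins[of "states S" "states S" "\<lambda>a. P a _" "\<lambda>c. Q _ c"] assms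
    by simp
  then obtain M where M: "\<forall>b\<in>states S. (\<forall>a c. M b a c \<ge> 0)
      \<and> (\<forall>a\<in>states S. (\<Sum>c\<in>states S. M b a c) = P a b)
      \<and> (\<forall>c\<in>states S. (\<Sum>a\<in>states S. M b a c) = Q b c)"
    by metis
  define x where "x v = (if v \<in> paths S then M (fst (snd v)) (fst v) (snd (snd v)) else 0)" for v
  have "is_table S x" unfolding is_table_def x_def using M by (auto simp: paths_def)
  moreover have "\<forall>a\<in>states S. \<forall>b\<in>states S. marg12 S x a b = P a b"
    using M unfolding marg12_def x_def by (simp add: mem_paths)
  moreover have "\<forall>b\<in>states S. \<forall>c\<in>states S. marg23 S x b c = Q b c"
    using M unfolding marg23_def x_def by (simp add: mem_paths)
  ultimately show ?thesis by blast
qed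

lemma nxt_in: "l \<in> {1..m} \<Longrightarrow> nxt m l \<in> {1..m}"
  by (auto simp: nxt_def)

lemma prv_in: "l \<in> {1..m} \<Longrightarrow> prv m l \<in> {1..m}"
  by (auto simp: prv_def)

lemma prv_nxt: "l \<in> {1..m} \<Longrightarrow> prv m (nxt m l) = l"
  by (auto simp: prv_def nxt_def)

lemma nxt_prv: "l \<in> {1..m} \<Longrightarrow> nxt m (prv m l) = l"
  by (auto simp: prv_def nxt_def)

lemma inj_on_nxt: "inj_on (nxt m) {1..m}"
  by (rule inj_onI) (metis prv_nxt)

lemma nxt_image: "nxt m ` {1..m} = {1..m}"
proof
  show "nxt m ` {1..m} \<subseteq> {1..m}" using nxt_in by blast
  show "{1..m} \<subseteq> nxt m ` {1..m}" using nxt_prv prv_in by (metis image_eqI subsetI)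
qed

lemma finite_orbit_repeats:
  assumes "finite X" "f ` X \<subseteq> X" "x \<in> X"
  shows "\<exists>p q. p < q \<and> (f ^^ q) x = (f ^^ p) x \<and> inj_on (\<lambda>n. (f ^^ n) x) {..<q}"
proof -
  let ?P = "\<lambda>q. \<exists>p<q. (f ^^ q) x = (f ^^ p) x"
  have orbit: "(f ^^ n) x \<in> X" for n
    by (induction n) (use assms in auto)
  have "\<not> inj_on (\<lambda>n. (f ^^ n) x) {..card X}"
  proof
    assume "inj_on (\<lambda>n. (f ^^ n) x) {..card X}"
    then have "card {..card X} \<le> card X"
      using card_inj_on_le[of _ "{..card X}" X] orbit assms(1) by blast
    then show False by simp
  qed
  have repeat: "?P (max n1 n2)" if "n1 \<noteq> n2" "(f ^^ n1) x = (f ^^ n2) x" for n1 n2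
  proof (cases "n1 < n2")
    case True
    then show ?thesis using that by (auto simp: max_def)
  next
    case False
    then show ?thesis using that by (intro exI[of _ n2]) (auto simp: max_def)
  qed
  obtain n1 n2 where "n1 \<noteq> n2" "(f ^^ n1) x = (f ^^ n2) x"
    using \<open>\<not> inj_on _ _\<close> unfolding inj_on_def by blast
  then have ex: "?P (max n1 n2)" by (rule repeat)
  define q where "q = (LEAST q. ?P q)"
  have "?P q" unfolding q_def using ex by (rule LeastI)
  moreover have "inj_on (\<lambda>n. (f ^^ n) x) {..<q}"
  proof (rule inj_onI, rule ccontr)
    fix n1 n2 assume n: "n1 \<in> {..<q}" "n2 \<in> {..<q}" "(f ^^ n1) x = (f ^^ n2) x" "n1 \<noteq> n2"
    then have "?P (max n1 n2)" by (intro repeat) simp_all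
    moreover have "max n1 n2 < q" using n by simp
    ultimately show False unfolding q_def using not_less_Least by blast
  qed
  ultimately show ?thesis by blast
qed

lemma self_map_cycle:
  assumes "finite X" "F ` X \<subseteq> X" "r0 \<in> X"
  obtains m i where "1 \<le> m" "inj_on i {1..m}" "i ` {1..m} \<subseteq> X" "\<forall>l\<in>{1..m}. F (i l) = i (nxt m l)"
proof -
  obtain p q where pq: "p < q" "(F ^^ q) r0 = (F ^^ p) r0" and inj: "inj_on (\<lambda>n. (F ^^ n) r0) {..<q}"
    using finite_orbit_repeats[OF assms] by blast
  define m where "m = q - p"
  define i where "i l = (F ^^ (p + l - 1)) r0" for l
  have "(F ^^ n) r0 \<in> X" for n
    by (induction n) (use assms in auto)
  then have "i ` {1..m} \<subseteq> X"
    unfolding i_def by blast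
  have F_i: "F (i l) = i (nxt m l)" if "l \<in> {1..m}" for l
  proof (cases "l = m")
    case True
    have "F (i l) = (F ^^ Suc (p + l - 1)) r0" unfolding i_def by simp
    also have "Suc (p + l - 1) = q" using that True pq unfolding m_def by auto
    finally show ?thesis using True pq unfolding i_def nxt_def by simp
  next
    case False
    have "F (i l) = (F ^^ Suc (p + l - 1)) r0" unfolding i_def by simp
    also have "Suc (p + l - 1) = p + nxt m l - 1" using that False unfolding nxt_def by auto
    finally show ?thesis unfolding i_def .
  qed
  have inj_i: "inj_on i {1..m}"
  proof (rule inj_onI)
    fix l1 l2 assume l: "l1 \<in> {1..m}" "l2 \<in> {1..m}" "i l1 = i l2"
    then have "p + l1 - 1 = p + l2 - 1"
      using inj_onD[OF inj, of "p + l1 - 1" "p + l2 - 1"] unfolding i_def m_def by auto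
    then show "l1 = l2" using l by auto
  qed
  show ?thesis using that[of m i] pq F_i inj_i \<open>i ` {1..m} \<subseteq> X\<close> unfolding m_def by auto
qed

text \<open>Starting from a row with a positive entry, alternately move within the column of a positive
  entry to a negative entry and within its row to a positive entry until the walk repeats.\<close>
lemma alternating_cycle:
  fixes D :: "'a \<Rightarrow> 'a \<Rightarrow> int"
  assumes fin: "finite X" and rows: "\<forall>a\<in>X. (\<Sum>b\<in>X. D a b) = 0"
    and cols: "\<forall>b\<in>X. (\<Sum>a\<in>X. D a b) = 0" and nz: "a0 \<in> X" "b0 \<in> X" "D a0 b0 \<noteq> 0"
  obtains m i j where "2 \<le> m" "inj_on i {1..m}" "inj_on j {1..m}" "i ` {1..m} \<subseteq> X" "j ` {1..m} \<subseteq> X"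
    "\<forall>l\<in>{1..m}. D (i l) (j l) > 0 \<and> D (i (nxt m l)) (j l) < 0"
proof -
  have row_pos: "\<exists>b\<in>X. D a b > 0" if "a \<in> X" "b' \<in> X" "D a b' < 0" for a b'
    using sum_eq_imp_ex_less[of X "\<lambda>_. 0" "D a" b'] fin rows that by auto
  have col_neg: "\<exists>a\<in>X. D a b < 0" if "b \<in> X" "a' \<in> X" "D a' b > 0" for a' b
    using sum_eq_imp_ex_less[of X "\<lambda>a. D a b" "\<lambda>_. 0" a'] fin cols that by auto
  have col_pos: "\<exists>a\<in>X. D a b > 0" if "b \<in> X" "a' \<in> X" "D a' b < 0" for a' b
    using sum_eq_imp_ex_less[of X "\<lambda>_. 0" "\<lambda>a. D a b" a'] fin cols that by auto
  define R where "R = {a\<in>X. \<exists>b\<in>X. D a b > 0}"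
  define col where "col a = (SOME b. b \<in> X \<and> D a b > 0)" for a
  define row where "row b = (SOME a. a \<in> X \<and> D a b < 0)" for b
  define F where "F a = row (col a)" for a
  have col: "col a \<in> X \<and> D a (col a) > 0" if "a \<in> R" for a
  proof -
    have "\<exists>b. b \<in> X \<and> D a b > 0" using that unfolding R_def by blast
    then show ?thesis unfolding col_def by (rule someI_ex)
  qed
  have F: "F a \<in> R \<and> D (F a) (col a) < 0" if "a \<in> R" for a
  proof -
    have "\<exists>a'. a' \<in> X \<and> D a' (col a) < 0" using col_neg col that R_def by blast
    then have "F a \<in> X \<and> D (F a) (col a) < 0" unfolding F_def row_def by (rule someI_ex)
    then show ?thesis using row_pos col that unfolding R_def by blast
  qed
  obtain r0 where r0: "r0 \<in> R"
  proof (cases "D a0 b0 > 0")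
    case True
    then show ?thesis using nz that unfolding R_def by blast
  next
    case False
    then obtain a where "a \<in> X" "D a b0 > 0" using nz col_pos[of b0 a0] by auto
    then show ?thesis using nz that unfolding R_def by blast
  qed
  have R: "finite R" "F ` R \<subseteq> R" using fin F unfolding R_def by auto
  obtain m i where m: "1 \<le> m" and inj_i: "inj_on i {1..m}" and iR: "i ` {1..m} \<subseteq> R"
    and F_i: "\<forall>l\<in>{1..m}. F (i l) = i (nxt m l)"
    by (rule self_map_cycle[OF R r0])
  define j where "j l = col (i l)" for l
  have inj_j: "inj_on j {1..m}"
  proof (rule inj_onI)
    fix l1 l2 assume l: "l1 \<in> {1..m}" "l2 \<in> {1..m}" "j l1 = j l2"
    then have "F (i l1) = F (i l2)" unfolding F_def j_def by simp
    then have "i (nxt m l1) = i (nxt m l2)" using F_i l by simp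
    then have "nxt m l1 = nxt m l2" using inj_onD[OF inj_i] nxt_in l by blast
    then show "l1 = l2" using inj_onD[OF inj_on_nxt] l by blast
  qed
  have signs: "D (i l) (j l) > 0 \<and> D (i (nxt m l)) (j l) < 0" if "l \<in> {1..m}" for l
  proof -
    have "i l \<in> R" using iR that by blast
    then show ?thesis using col[of "i l"] F[of "i l"] F_i that unfolding j_def by auto
  qed
  have "m \<noteq> 1"
  proof
    assume "m = 1"
    then have "nxt m 1 = 1" by (simp add: nxt_def)
    then show False using signs[of 1] \<open>m = 1\<close> by auto
  qed
  then have "2 \<le> m" using m by linarith
  moreover have "i ` {1..m} \<subseteq> X" "j ` {1..m} \<subseteq> X" using iR col unfolding R_def j_def by auto
  ultimately show ?thesis using inj_i inj_j signs by (intro that[of m i j]) auto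
qed

definition path_indicator :: "nat set \<Rightarrow> (nat \<Rightarrow> nat) \<Rightarrow> (nat \<Rightarrow> nat) \<Rightarrow> table" where
  "path_indicator K f g v =
    (if fst (snd v) \<in> K \<and> fst v = f (fst (snd v)) \<and> snd (snd v) = g (fst (snd v)) then 1 else 0)"

lemma marg12_path_indicator:
  "marg12 S (path_indicator K f g) a b = (if b \<in> K \<and> a = f b \<and> g b \<in> states S then 1 else 0)"
  unfolding marg12_def path_indicator_def by (auto intro!: sum.neutral)

lemma marg23_path_indicator:
  "marg23 S (path_indicator K f g) b c = (if b \<in> K \<and> c = g b \<and> f b \<in> states S then 1 else 0)"
  unfolding marg23_def path_indicator_def by (auto intro!: sum.neutral)

lemma path_indicator_outside_paths:
  "K \<subseteq> states S \<Longrightarrow> f ` K \<subseteq> states S \<Longrightarrow> g ` K \<subseteq> states S \<Longrightarrow> w \<notin> paths S \<Longrightarrow>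
    path_indicator K f g w = 0"
  unfolding path_indicator_def paths_def by (cases w) auto

text \<open>Remove one unit of each transition (f b, b) and (b, g b) from the marginals, realize the
  rest by a table and add the paths (f b, b, g b) back.\<close>
lemma exists_table_containing_paths:
  assumes x: "is_table S x" and K: "K \<subseteq> states S"
    and fg: "\<forall>b\<in>K. f b \<in> states S \<and> g b \<in> states S \<and> marg12 S x (f b) b \<ge> 1 \<and> marg23 S x b (g b) \<ge> 1"
  shows "\<exists>x'. is_table S x' \<and> (\<forall>a\<in>states S. \<forall>b\<in>states S. marg12 S x' a b = marg12 S x a b)
    \<and> (\<forall>b\<in>states S. \<forall>c\<in>states S. marg23 S x' b c = marg23 S x b c)
    \<and> (\<forall>v. path_indicator K f g v \<le> x' v)"
proof -
  define P where "P a b = marg12 S x a b - (if b \<in> K \<and> a = f b then 1 else 0)" for a b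
  define Q where "Q b c = marg23 S x b c - (if b \<in> K \<and> c = g b then 1 else 0)" for b c
  have "\<forall>a\<in>states S. \<forall>b\<in>states S. P a b \<ge> 0" "\<forall>b\<in>states S. \<forall>c\<in>states S. Q b c \<ge> 0"
    using fg marg12_nonneg[OF x] marg23_nonneg[OF x] unfolding P_def Q_def by auto
  moreover have "\<forall>b\<in>states S. (\<Sum>a\<in>states S. P a b) = (\<Sum>c\<in>states S. Q b c)"
  proof
    fix b
    have count: "(\<Sum>a\<in>states S. if b \<in> K \<and> a = h b then 1 else 0) = (if b \<in> K then 1 else (0::int))"
      if "\<forall>b\<in>K. h b \<in> states S" for h
      using that by (cases "b \<in> K") (simp_all add: sum.delta')
    show "(\<Sum>a\<in>states S. P a b) = (\<Sum>c\<in>states S. Q b c)"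
      using fg sum_marg12_eq_sum_marg23[of S x b] count[of f] count[of g]
      unfolding P_def Q_def by (simp add: sum_subtractf)
  qed
  ultimately obtain x0 where x0: "is_table S x0"
    "\<forall>a\<in>states S. \<forall>b\<in>states S. marg12 S x0 a b = P a b"
    "\<forall>b\<in>states S. \<forall>c\<in>states S. marg23 S x0 b c = Q b c"
    using table_with_marginals by blast
  define x' where "x' v = x0 v + path_indicator K f g v" for v
  have "f ` K \<subseteq> states S" "g ` K \<subseteq> states S" using fg by auto
  then have "is_table S x'"
    using x0(1) path_indicator_outside_paths[OF K] unfolding is_table_def x'_def
    by (simp add: path_indicator_def)
  moreover have "\<forall>a\<in>states S. \<forall>b\<in>states S. marg12 S x' a b = marg12 S x a b"
    using x0(2) fg unfolding x'_def marg12_add marg12_path_indicator P_def by auto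
  moreover have "\<forall>b\<in>states S. \<forall>c\<in>states S. marg23 S x' b c = marg23 S x b c"
    using x0(3) fg unfolding x'_def marg23_add marg23_path_indicator Q_def by auto
  moreover have "\<forall>v. path_indicator K f g v \<le> x' v"
    using x0(1) unfolding x'_def is_table_def by simp
  ultimately show ?thesis by blast
qed

text \<open>W1 and W2 contain exactly one path through each middle state b in I \<union> J; its first state is
  head1 b (resp. head2 b) and its last state tail1 b (resp. tail2 b).  In the notation of the
  statement, head1 = i(-) and head2 = i'(-) on J, both are s on I - J; tail1 = k(-) and
  tail2 = k'(-) on I, both are s~ on J - I.\<close>
definition head1 :: "nat \<Rightarrow> (nat \<Rightarrow> nat) \<Rightarrow> (nat \<Rightarrow> nat) \<Rightarrow> (nat \<Rightarrow> nat) \<Rightarrow> nat \<Rightarrow> nat" where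
  "head1 m i j s b = (if b \<in> j ` {1..m} then i (the_inv_into {1..m} j b) else s b)"

definition head2 :: "nat \<Rightarrow> (nat \<Rightarrow> nat) \<Rightarrow> (nat \<Rightarrow> nat) \<Rightarrow> (nat \<Rightarrow> nat) \<Rightarrow> nat \<Rightarrow> nat" where
  "head2 m i j s b = (if b \<in> j ` {1..m} then i (nxt m (the_inv_into {1..m} j b)) else s b)"

definition tail1 :: "nat \<Rightarrow> (nat \<Rightarrow> nat) \<Rightarrow> (nat \<Rightarrow> nat) \<Rightarrow> (nat \<Rightarrow> nat) \<Rightarrow> nat \<Rightarrow> nat" where
  "tail1 m i j st b = (if b \<in> i ` {1..m} then j (prv m (the_inv_into {1..m} i b)) else st b)"

definition tail2 :: "nat \<Rightarrow> (nat \<Rightarrow> nat) \<Rightarrow> (nat \<Rightarrow> nat) \<Rightarrow> (nat \<Rightarrow> nat) \<Rightarrow> nat \<Rightarrow> nat" where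
  "tail2 m i j st b = (if b \<in> i ` {1..m} then j (the_inv_into {1..m} i b) else st b)"

lemma zbar_eq_path_indicators:
  "zbar m i j s st = (\<lambda>v. path_indicator (i ` {1..m} \<union> j ` {1..m}) (head1 m i j s) (tail1 m i j st) v
     - path_indicator (i ` {1..m} \<union> j ` {1..m}) (head2 m i j s) (tail2 m i j st) v)"
proof -
  have "v \<in> W1 m i j s st \<longleftrightarrow> path_indicator (i ` {1..m} \<union> j ` {1..m}) (head1 m i j s) (tail1 m i j st) v = 1"
    "v \<in> W2 m i j s st \<longleftrightarrow> path_indicator (i ` {1..m} \<union> j ` {1..m}) (head2 m i j s) (tail2 m i j st) v = 1"
    for v
    by (cases v; auto simp: W1_def W2_def Let_def head1_def tail1_def head2_def tail2_def
        path_indicator_def image_iff)+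
  moreover have "finite (W1 m i j s st)" "finite (W2 m i j s st)"
    by (simp_all add: W1_def W2_def Let_def)
  ultimately show ?thesis
    unfolding zbar_def unit_table_def by (auto simp: fun_eq_iff path_indicator_def)
qed

context
  fixes S m :: nat and i j s st :: "nat \<Rightarrow> nat"
  assumes m: "1 \<le> m" and inj_i: "inj_on i {1..m}" and inj_j: "inj_on j {1..m}"
    and i_states: "i ` {1..m} \<subseteq> states S" and j_states: "j ` {1..m} \<subseteq> states S"
    and s_states: "s ` (i ` {1..m} - j ` {1..m}) \<subseteq> states S"
    and st_states: "st ` (j ` {1..m} - i ` {1..m}) \<subseteq> states S"
begin

lemma head1_j: "l \<in> {1..m} \<Longrightarrow> head1 m i j s (j l) = i l"
  unfolding head1_def using inj_j by (simp add: the_inv_into_f_f)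

lemma head2_j: "l \<in> {1..m} \<Longrightarrow> head2 m i j s (j l) = i (nxt m l)"
  unfolding head2_def using inj_j by (simp add: the_inv_into_f_f)

lemma tail1_i: "l \<in> {1..m} \<Longrightarrow> tail1 m i j st (i l) = j (prv m l)"
  unfolding tail1_def using inj_i by (simp add: the_inv_into_f_f)

lemma tail2_i: "l \<in> {1..m} \<Longrightarrow> tail2 m i j st (i l) = j l"
  unfolding tail2_def using inj_i by (simp add: the_inv_into_f_f)

lemma head_notin_j: "b \<notin> j ` {1..m} \<Longrightarrow> head1 m i j s b = s b \<and> head2 m i j s b = s b"
  unfolding head1_def head2_def by simp

lemma tail_notin_i: "b \<notin> i ` {1..m} \<Longrightarrow> tail1 m i j st b = st b \<and> tail2 m i j st b = st b"
  unfolding tail1_def tail2_def by simp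

lemma heads_in_states:
  assumes "b \<in> i ` {1..m} \<union> j ` {1..m}"
  shows "head1 m i j s b \<in> states S \<and> head2 m i j s b \<in> states S"
proof (cases "b \<in> j ` {1..m}")
  case True
  then obtain l where "l \<in> {1..m}" "b = j l" by auto
  then show ?thesis using head1_j head2_j nxt_in i_states by auto
next
  case False
  then show ?thesis using head_notin_j s_states assms by auto
qed

lemma tails_in_states:
  assumes "b \<in> i ` {1..m} \<union> j ` {1..m}"
  shows "tail1 m i j st b \<in> states S \<and> tail2 m i j st b \<in> states S"
proof (cases "b \<in> i ` {1..m}")
  case True
  then obtain l where "l \<in> {1..m}" "b = i l" by auto
  then show ?thesis using tail1_i tail2_i prv_in j_states by auto
next
  case False
  then show ?thesis using tail_notin_i st_states assms by auto
qed

lemma marg12_zbar: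
  "marg12 S (zbar m i j s st) a b = (if \<exists>l\<in>{1..m}. a = i l \<and> b = j l then 1 else 0)
     - (if \<exists>l\<in>{1..m}. a = i (nxt m l) \<and> b = j l then 1 else (0::int))"
proof (cases "b \<in> j ` {1..m}")
  case True
  then obtain l where l: "l \<in> {1..m}" "b = j l" by auto
  have "(\<exists>l'\<in>{1..m}. a = i l' \<and> b = j l') \<longleftrightarrow> a = i l"
    "(\<exists>l'\<in>{1..m}. a = i (nxt m l') \<and> b = j l') \<longleftrightarrow> a = i (nxt m l)"
    using l inj_j by (auto simp: inj_on_eq_iff)
  then show ?thesis
    using l True heads_in_states tails_in_states head1_j head2_j
    by (simp add: zbar_eq_path_indicators marg12_diff marg12_path_indicator)
next
  case False
  then show ?thesis
    using heads_in_states tails_in_states head_notin_j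
    by (auto simp: zbar_eq_path_indicators marg12_diff marg12_path_indicator)
qed

lemma marg23_zbar:
  "marg23 S (zbar m i j s st) a b = (if \<exists>l\<in>{1..m}. a = i (nxt m l) \<and> b = j l then 1 else 0)
     - (if \<exists>l\<in>{1..m}. a = i l \<and> b = j l then 1 else (0::int))"
proof (cases "a \<in> i ` {1..m}")
  case True
  then obtain l where l: "l \<in> {1..m}" "a = i l" by auto
  have "(\<exists>l'\<in>{1..m}. a = i l' \<and> b = j l') \<longleftrightarrow> b = j l"
    using l inj_i by (auto simp: inj_on_eq_iff)
  moreover have "(\<exists>l'\<in>{1..m}. a = i (nxt m l') \<and> b = j l') \<longleftrightarrow> b = j (prv m l)"
  proof
    assume "\<exists>l'\<in>{1..m}. a = i (nxt m l') \<and> b = j l'"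
    then obtain l' where l': "l' \<in> {1..m}" "a = i (nxt m l')" "b = j l'" by blast
    then have "nxt m l' = l" using l inj_i nxt_in by (auto simp: inj_on_eq_iff)
    then show "b = j (prv m l)" using prv_nxt l' by metis
  next
    assume "b = j (prv m l)"
    then show "\<exists>l'\<in>{1..m}. a = i (nxt m l') \<and> b = j l'"
      using l prv_in nxt_prv by metis
  qed
  ultimately show ?thesis
    using l True heads_in_states tails_in_states tail1_i tail2_i
    by (simp add: zbar_eq_path_indicators marg23_diff marg23_path_indicator)
next
  case False
  then show ?thesis
    using heads_in_states tails_in_states tail_notin_i nxt_in
    by (auto simp: zbar_eq_path_indicators marg23_diff marg23_path_indicator)
qed

lemma sum_marg12_zbar: "(\<Sum>b\<in>states S. marg12 S (zbar m i j s st) a b) = 0"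
proof -
  have count: "(\<Sum>b\<in>states S. if \<exists>l\<in>{1..m}. a = g l \<and> b = j l then 1 else (0::int))
      = (\<Sum>l\<in>{1..m}. if a = g l then 1 else 0)" for g
  proof -
    have "(\<Sum>b\<in>states S. if \<exists>l\<in>{1..m}. a = g l \<and> b = j l then 1 else (0::int))
        = (\<Sum>b\<in>j ` {1..m}. if \<exists>l\<in>{1..m}. a = g l \<and> b = j l then 1 else 0)"
      using j_states by (intro sum.mono_neutral_right) auto
    also have "\<dots> = (\<Sum>l\<in>{1..m}. if a = g l then 1 else 0)"
      using inj_j by (simp add: sum.reindex) (intro sum.cong refl, auto simp: inj_on_eq_iff)
    finally show ?thesis .
  qed
  have "(\<Sum>l\<in>{1..m}. if a = i (nxt m l) then 1 else (0::int))
      = (\<Sum>l\<in>nxt m ` {1..m}. if a = i l then 1 else 0)"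
    by (subst sum.reindex[OF inj_on_nxt]) (simp add: o_def)
  also have "\<dots> = (\<Sum>l\<in>{1..m}. if a = i l then 1 else 0)"
    unfolding nxt_image ..
  finally show ?thesis
    unfolding marg12_zbar sum_subtractf count by simp
qed

lemma zbar_is_move: "is_move S (zbar m i j s st)"
proof (rule is_moveI)
  show "zbar m i j s st w = 0" if "w \<notin> paths S" for w
    using that i_states j_states heads_in_states tails_in_states
    by (simp add: zbar_eq_path_indicators path_indicator_outside_paths image_subset_iff)
qed (rule sum_marg12_zbar, simp add: marg12_zbar marg23_zbar)

text \<open>Along an alternating cycle of D, the first-transition marginal of zbar is +1 exactly where
  D is positive and -1 exactly where D is negative, so subtracting it shrinks every entry of D
  towards 0.\<close>
lemma distance_minus_marg12_zbar:
  fixes D :: "nat \<Rightarrow> nat \<Rightarrow> int"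
  assumes m2: "2 \<le> m" and signs: "\<forall>l\<in>{1..m}. D (i l) (j l) > 0 \<and> D (i (nxt m l)) (j l) < 0"
  shows "(\<Sum>(a,b)\<in>states S \<times> states S. \<bar>D a b - marg12 S (zbar m i j s st) a b\<bar>)
    < (\<Sum>(a,b)\<in>states S \<times> states S. \<bar>D a b\<bar>)"
proof -
  let ?C = "marg12 S (zbar m i j s st)"
  have C_pos: "?C (i l) (j l) = 1" if l: "l \<in> {1..m}" for l
  proof -
    have "\<not> (\<exists>l'\<in>{1..m}. i l = i (nxt m l') \<and> j l = j l')"
    proof
      assume "\<exists>l'\<in>{1..m}. i l = i (nxt m l') \<and> j l = j l'"
      then obtain l' where l': "l' \<in> {1..m}" "i l = i (nxt m l')" "j l = j l'" by blast
      then have "l' = l" using l inj_j by (auto simp: inj_on_eq_iff)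
      then have "nxt m l = l" using l l' inj_i nxt_in by (auto simp: inj_on_eq_iff)
      then show False using m2 by (simp add: nxt_def split: if_splits)
    qed
    then show ?thesis using l unfolding marg12_zbar by auto
  qed
  have pointwise: "\<bar>D a b - ?C a b\<bar> = \<bar>D a b\<bar> - \<bar>?C a b\<bar>" for a b
  proof (cases "\<exists>l\<in>{1..m}. a = i l \<and> b = j l")
    case True
    then show ?thesis using signs C_pos by auto
  next
    case False
    then show ?thesis using signs unfolding marg12_zbar by auto
  qed
  have "1 \<in> {1..m}" using m2 by simp
  then have "?C (i 1) (j 1) = 1" "(i 1, j 1) \<in> states S \<times> states S"
    using C_pos i_states j_states by auto
  then have "(\<Sum>(a,b)\<in>states S \<times> states S. \<bar>?C a b\<bar>) > 0"
    by (intro sum_pos2[of _ "(i 1, j 1)"]) auto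
  then show ?thesis
    by (simp add: pointwise sum_subtractf case_prod_beta')
qed

end

lemma exists_zbar_ends:
  assumes m: "1 \<le> m" and inj_i: "inj_on i {1..m}" and inj_j: "inj_on j {1..m}"
    and i_states: "i ` {1..m} \<subseteq> states S" and j_states: "j ` {1..m} \<subseteq> states S"
    and x: "is_table S x"
    and pos: "\<forall>l\<in>{1..m}. marg12 S x (i l) (j l) \<ge> 1 \<and> marg23 S x (i (nxt m l)) (j l) \<ge> 1"
  obtains s st where "s ` (i ` {1..m} - j ` {1..m}) \<subseteq> states S"
    "st ` (j ` {1..m} - i ` {1..m}) \<subseteq> states S"
    "\<forall>b\<in>i ` {1..m} \<union> j ` {1..m}.
       marg12 S x (head1 m i j s b) b \<ge> 1 \<and> marg23 S x b (tail1 m i j st b) \<ge> 1"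
proof -
  let ?K = "i ` {1..m} \<union> j ` {1..m}"
  have through: "(\<Sum>a\<in>states S. marg12 S x a b) \<ge> 1" if b: "b \<in> ?K" for b
  proof (cases "b \<in> j ` {1..m}")
    case True
    then obtain l where "l \<in> {1..m}" "b = j l" by auto
    then show ?thesis
      using pos i_states member_le_sum[of "i l" "states S" "\<lambda>a. marg12 S x a b"] marg12_nonneg[OF x]
      by fastforce
  next
    case False
    then obtain l where l: "l \<in> {1..m}" "b = i l" using b by auto
    then have "marg23 S x b (j (prv m l)) \<ge> 1" using pos prv_in nxt_prv by metis
    then show ?thesis
      using l j_states prv_in sum_marg12_eq_sum_marg23[of S x b] marg23_nonneg[OF x]
        member_le_sum[of "j (prv m l)" "states S" "\<lambda>c. marg23 S x b c"]
      by fastforce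
  qed
  have ex_pos: "\<exists>a. a \<in> states S \<and> f a \<ge> 1" if "sum f (states S) \<ge> (1::int)" for f
  proof (rule ccontr)
    assume "\<nexists>a. a \<in> states S \<and> f a \<ge> 1"
    then have "sum f (states S) \<le> 0" by (intro sum_nonpos) auto
    then show False using that by simp
  qed
  define s where "s b = (SOME a. a \<in> states S \<and> marg12 S x a b \<ge> 1)" for b
  define st where "st b = (SOME c. c \<in> states S \<and> marg23 S x b c \<ge> 1)" for b
  have s: "s b \<in> states S \<and> marg12 S x (s b) b \<ge> 1" if "b \<in> ?K" for b
    unfolding s_def using ex_pos[OF through[OF that]] by (rule someI_ex)
  have st: "st b \<in> states S \<and> marg23 S x b (st b) \<ge> 1" if "b \<in> ?K" for b
    unfolding st_def using ex_pos through[OF that] sum_marg12_eq_sum_marg23[of S x b]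
    by (metis (mono_tags, lifting) someI_ex)
  have s_states: "s ` (i ` {1..m} - j ` {1..m}) \<subseteq> states S"
    and st_states: "st ` (j ` {1..m} - i ` {1..m}) \<subseteq> states S"
    using s st by auto
  note cycle = m inj_i inj_j i_states j_states s_states st_states
  have "marg12 S x (head1 m i j s b) b \<ge> 1 \<and> marg23 S x b (tail1 m i j st b) \<ge> 1" if b: "b \<in> ?K" for b
  proof
    show "marg12 S x (head1 m i j s b) b \<ge> 1"
    proof (cases "b \<in> j ` {1..m}")
      case True
      then obtain l where "l \<in> {1..m}" "b = j l" by auto
      then show ?thesis using head1_j[OF cycle] pos by simp
    qed (use s[OF b] head_notin_j[OF cycle] in simp)
    show "marg23 S x b (tail1 m i j st b) \<ge> 1"
    proof (cases "b \<in> i ` {1..m}")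
      case True
      then obtain l where l: "l \<in> {1..m}" "b = i l" by auto
      then have "marg23 S x (i (nxt m (prv m l))) (j (prv m l)) \<ge> 1" using pos prv_in by blast
      then show ?thesis using l tail1_i[OF cycle] nxt_prv by simp
    qed (use st[OF b] tail_notin_i[OF cycle] in simp)
  qed
  then show ?thesis using that[OF s_states st_states] by blast
qed

lemma exists_table_above_zbar:
  assumes m: "1 \<le> m" and inj_i: "inj_on i {1..m}" and inj_j: "inj_on j {1..m}"
    and i_states: "i ` {1..m} \<subseteq> states S" and j_states: "j ` {1..m} \<subseteq> states S"
    and x: "is_table S x"
    and pos: "\<forall>l\<in>{1..m}. marg12 S x (i l) (j l) \<ge> 1 \<and> marg23 S x (i (nxt m l)) (j l) \<ge> 1"
  obtains s st x' where "s ` (i ` {1..m} - j ` {1..m}) \<subseteq> states S"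
    "st ` (j ` {1..m} - i ` {1..m}) \<subseteq> states S"
    "is_table S x'" "\<forall>a\<in>states S. \<forall>b\<in>states S. marg12 S x' a b = marg12 S x a b"
    "\<forall>b\<in>states S. \<forall>c\<in>states S. marg23 S x' b c = marg23 S x b c"
    "\<forall>v. zbar m i j s st v \<le> x' v"
proof -
  let ?K = "i ` {1..m} \<union> j ` {1..m}"
  obtain s st where s_st: "s ` (i ` {1..m} - j ` {1..m}) \<subseteq> states S"
      "st ` (j ` {1..m} - i ` {1..m}) \<subseteq> states S"
    and ends: "\<forall>b\<in>?K. marg12 S x (head1 m i j s b) b \<ge> 1 \<and> marg23 S x b (tail1 m i j st b) \<ge> 1"
    by (rule exists_zbar_ends[OF assms])
  note cycle = m inj_i inj_j i_states j_states s_st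
  have "?K \<subseteq> states S" using i_states j_states by blast
  moreover have "\<forall>b\<in>?K. head1 m i j s b \<in> states S \<and> tail1 m i j st b \<in> states S \<and>
      marg12 S x (head1 m i j s b) b \<ge> 1 \<and> marg23 S x b (tail1 m i j st b) \<ge> 1"
    using ends heads_in_states[OF cycle] tails_in_states[OF cycle] by blast
  ultimately obtain x' where x': "is_table S x'"
    "\<forall>a\<in>states S. \<forall>b\<in>states S. marg12 S x' a b = marg12 S x a b"
    "\<forall>b\<in>states S. \<forall>c\<in>states S. marg23 S x' b c = marg23 S x b c"
    "\<forall>v. path_indicator ?K (head1 m i j s) (tail1 m i j st) v \<le> x' v"
    using exists_table_containing_paths[OF x] by metis
  have "zbar m i j s st v \<le> x' v" for v
  proof -
    have "zbar m i j s st v \<le> path_indicator ?K (head1 m i j s) (tail1 m i j st) v"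
      unfolding zbar_eq_path_indicators by (simp add: path_indicator_def)
    also have "\<dots> \<le> x' v" using x'(4) by blast
    finally show ?thesis .
  qed
  then have "\<forall>v. zbar m i j s st v \<le> x' v" by blast
  then show ?thesis by (rule that[OF s_st x'(1-3)])
qed

lemma zbar_in_zbar_moves:
  assumes "2 \<le> m" "inj_on i {1..m}" "inj_on j {1..m}" "i ` {1..m} \<subseteq> states S" "j ` {1..m} \<subseteq> states S"
    "s ` (i ` {1..m} - j ` {1..m}) \<subseteq> states S" "st ` (j ` {1..m} - i ` {1..m}) \<subseteq> states S"
  shows "zbar m i j s st \<in> zbar_moves S"
proof -
  have "m \<le> S"
    using card_inj_on_le[OF assms(2,4)] by (simp add: states_def)
  then show ?thesis
    unfolding zbar_moves_def using assms
    by (intro CollectI exI[of _ m] exI[of _ i] exI[of _ j] exI[of _ s] exI[of _ st]) simp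
qed

lemma zbar_move_is_move:
  assumes "z \<in> zbar_moves S"
  shows "is_move S z"
proof -
  obtain m i j s st where "z = zbar m i j s st" "2 \<le> m" "inj_on i {1..m}" "inj_on j {1..m}"
    "i ` {1..m} \<subseteq> states S" "j ` {1..m} \<subseteq> states S"
    "s ` (i ` {1..m} - j ` {1..m}) \<subseteq> states S" "st ` (j ` {1..m} - i ` {1..m}) \<subseteq> states S"
    using assms unfolding zbar_moves_def mem_Collect_eq by (elim exE conjE) simp
  then show ?thesis using zbar_is_move[of m i j S s st] by simp
qed

lemma suff_stat_diff_move:
  assumes "is_move S z"
  shows "suff_stat S (\<lambda>v. x v - z v) = suff_stat S x"
proof -
  have "\<forall>a\<in>states S. (\<Sum>b\<in>states S. marg12 S z a b) = 0"
    and trans: "\<forall>a\<in>states S. \<forall>b\<in>states S. marg12 S z a b + marg23 S z a b = 0"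
    using assms unfolding is_move_def suff_stat_eq_iff by (simp_all add: marg12_def marg23_def)
  moreover have "\<forall>a\<in>states S. \<forall>b\<in>states S. marg23 S z a b = - marg12 S z a b"
    using trans by (simp add: eq_neg_iff_add_eq_0 add.commute)
  ultimately show ?thesis
    unfolding suff_stat_eq_iff marg12_diff marg23_diff by (simp add: sum_subtractf)
qed

text \<open>Column b of marg12 x - marg12 y counts the same paths (those through b) as row b of
  marg23 x - marg23 y, which by the transition counts is minus row b.\<close>
lemma marg12_difference_balanced:
  assumes "suff_stat S x = suff_stat S y"
  shows "\<forall>a\<in>states S. (\<Sum>b\<in>states S. marg12 S x a b - marg12 S y a b) = 0"
    and "\<forall>b\<in>states S. (\<Sum>a\<in>states S. marg12 S x a b - marg12 S y a b) = 0"
proof -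
  have rows: "\<forall>a\<in>states S. (\<Sum>b\<in>states S. marg12 S x a b) = (\<Sum>b\<in>states S. marg12 S y a b)"
    and trans: "\<forall>a\<in>states S. \<forall>b\<in>states S.
      marg12 S x a b + marg23 S x a b = marg12 S y a b + marg23 S y a b"
    using assms unfolding suff_stat_eq_iff by blast+
  then show row_sums: "\<forall>a\<in>states S. (\<Sum>b\<in>states S. marg12 S x a b - marg12 S y a b) = 0"
    by (simp add: sum_subtractf)
  show "\<forall>b\<in>states S. (\<Sum>a\<in>states S. marg12 S x a b - marg12 S y a b) = 0"
  proof
    fix b assume b: "b \<in> states S"
    have "(\<Sum>a\<in>states S. marg12 S x a b - marg12 S y a b)
        = (\<Sum>c\<in>states S. marg23 S x b c - marg23 S y b c)"
      unfolding sum_subtractf sum_marg12_eq_sum_marg23 ..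
    also have "\<dots> = - (\<Sum>c\<in>states S. marg12 S x b c - marg12 S y b c)"
      using trans b unfolding sum_negf[symmetric] by (intro sum.cong refl) (simp add: algebra_simps)
    finally show "(\<Sum>a\<in>states S. marg12 S x a b - marg12 S y a b) = 0" using row_sums b by simp
  qed
qed

lemma cycle_transitions_present:
  assumes y: "is_table S y" and stat: "suff_stat S x = suff_stat S y"
    and ij_states: "i ` {1..m} \<subseteq> states S" "j ` {1..m} \<subseteq> states S"
    and signs: "\<forall>l\<in>{1..m}. marg12 S x (i l) (j l) - marg12 S y (i l) (j l) > 0 \<and>
      marg12 S x (i (nxt m l)) (j l) - marg12 S y (i (nxt m l)) (j l) < 0"
  shows "\<forall>l\<in>{1..m}. marg12 S x (i l) (j l) \<ge> 1 \<and> marg23 S x (i (nxt m l)) (j l) \<ge> 1"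
proof
  fix l assume l: "l \<in> {1..m}"
  then have "i (nxt m l) \<in> states S" "j l \<in> states S" using ij_states nxt_in by auto
  then have "marg12 S x (i (nxt m l)) (j l) + marg23 S x (i (nxt m l)) (j l)
      = marg12 S y (i (nxt m l)) (j l) + marg23 S y (i (nxt m l)) (j l)"
    using stat unfolding suff_stat_eq_iff by blast
  then show "marg12 S x (i l) (j l) \<ge> 1 \<and> marg23 S x (i (nxt m l)) (j l) \<ge> 1"
    using signs[rule_format, OF l] marg12_nonneg[OF y, of "i l" "j l"]
      marg23_nonneg[OF y, of "i (nxt m l)" "j l"] by linarith
qed

lemma reachable_if_same_statistic:
  assumes B: "crossing_swaps S \<subseteq> B" "zbar_moves S \<subseteq> B"
    and "is_table S x" "is_table S y" "suff_stat S x = suff_stat S y"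
  shows "reachable B x y"
  using assms(3-)
proof (induction "nat (\<Sum>(a,b)\<in>states S \<times> states S. \<bar>marg12 S x a b - marg12 S y a b\<bar>)"
    arbitrary: x rule: less_induct)
  case less
  note x = less.prems(1) and y = less.prems(2) and stat = less.prems(3)
  define D where "D a b = marg12 S x a b - marg12 S y a b" for a b
  show ?case
  proof (cases "\<forall>a\<in>states S. \<forall>b\<in>states S. D a b = 0")
    case True
    then show ?thesis
      using reachable_if_same_marginals[OF B(1) x y] stat unfolding D_def suff_stat_eq_iff by simp
  next
    case False
    then obtain a0 b0 where nz: "a0 \<in> states S" "b0 \<in> states S" "D a0 b0 \<noteq> 0" by blast
    have rows: "\<forall>a\<in>states S. (\<Sum>b\<in>states S. D a b) = 0"
      and cols: "\<forall>b\<in>states S. (\<Sum>a\<in>states S. D a b) = 0"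
      using marg12_difference_balanced[OF stat] unfolding D_def by blast+
    obtain m i j where m: "2 \<le> m" and inj: "inj_on i {1..m}" "inj_on j {1..m}"
      and ij_states: "i ` {1..m} \<subseteq> states S" "j ` {1..m} \<subseteq> states S"
      and signs: "\<forall>l\<in>{1..m}. D (i l) (j l) > 0 \<and> D (i (nxt m l)) (j l) < 0"
      by (rule alternating_cycle[OF finite_states rows cols nz])
    have m1: "1 \<le> m" using m by simp
    obtain s st x' where s_st: "s ` (i ` {1..m} - j ` {1..m}) \<subseteq> states S"
        "st ` (j ` {1..m} - i ` {1..m}) \<subseteq> states S"
      and x': "is_table S x'" "\<forall>a\<in>states S. \<forall>b\<in>states S. marg12 S x' a b = marg12 S x a b"
        "\<forall>b\<in>states S. \<forall>c\<in>states S. marg23 S x' b c = marg23 S x b c"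
      and below: "\<forall>v. zbar m i j s st v \<le> x' v"
      using exists_table_above_zbar[OF m1 inj ij_states x cycle_transitions_present[OF y stat ij_states]]
        signs unfolding D_def by blast
    note cycle = m1 inj ij_states s_st
    define z where "z = zbar m i j s st"
    define x'' where "x'' v = x' v - z v" for v
    have "z \<in> B" using zbar_in_zbar_moves[OF m inj ij_states s_st] B(2) unfolding z_def by blast
    have move: "is_move S z" using zbar_is_move[OF cycle] unfolding z_def .
    have "reachable B x x'" using reachable_if_same_marginals[OF B(1) x x'(1)] x' by simp
    moreover have "reachable B x' x''"
      using reachable_single[OF \<open>z \<in> B\<close> disjI2[OF refl]] x'(1) below
      unfolding is_table_def x''_def z_def by simp
    moreover have "reachable B x'' y"
    proof (rule less.hyps)
      show "is_table S x''"
        using x'(1) below move unfolding is_table_def is_move_def x''_def z_def by simp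
      have "suff_stat S x' = suff_stat S x" using x' unfolding suff_stat_eq_iff by simp
      then show "suff_stat S x'' = suff_stat S y"
        using suff_stat_diff_move[OF move, of x'] stat unfolding x''_def by simp
      have "(\<Sum>(a,b)\<in>states S \<times> states S. \<bar>marg12 S x'' a b - marg12 S y a b\<bar>)
          = (\<Sum>(a,b)\<in>states S \<times> states S. \<bar>D a b - marg12 S z a b\<bar>)"
        unfolding x''_def marg12_diff using x'(2) by (intro sum.cong refl) (auto simp: D_def)
      also have "\<dots> < (\<Sum>(a,b)\<in>states S \<times> states S. \<bar>D a b\<bar>)"
        unfolding z_def by (rule distance_minus_marg12_zbar[OF cycle m signs])
      finally have "(\<Sum>(a,b)\<in>states S \<times> states S. \<bar>marg12 S x'' a b - marg12 S y a b\<bar>)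
          < (\<Sum>(a,b)\<in>states S \<times> states S. \<bar>marg12 S x a b - marg12 S y a b\<bar>)"
        unfolding D_def .
      moreover have "0 \<le> (\<Sum>(a,b)\<in>states S \<times> states S. \<bar>marg12 S x'' a b - marg12 S y a b\<bar>)"
        by (intro sum_nonneg) auto
      ultimately show "nat (\<Sum>(a,b)\<in>states S \<times> states S. \<bar>marg12 S x'' a b - marg12 S y a b\<bar>)
          < nat (\<Sum>(a,b)\<in>states S \<times> states S. \<bar>marg12 S x a b - marg12 S y a b\<bar>)"
        by simp
    qed (rule y)
    ultimately show ?thesis by (metis reachable_trans)
  qed
qed

theorem proposition2:
  fixes S :: nat
  assumes "S \<ge> 2"
  shows "markov_basis S (crossing_swaps S \<union> zbar_moves S)"
  unfolding markov_basis_def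
proof (intro conjI ballI allI impI)
  fix z assume "z \<in> crossing_swaps S \<union> zbar_moves S"
  then show "is_move S z" using crossing_swap_is_move zbar_move_is_move by blast
next
  fix x y assume "is_table S x \<and> is_table S y \<and> suff_stat S x = suff_stat S y"
  then have "reachable (crossing_swaps S \<union> zbar_moves S) x y"
    by (intro reachable_if_same_statistic) auto
  then show "\<exists>zs. (\<forall>k<length zs. \<exists>z\<in>crossing_swaps S \<union> zbar_moves S. zs ! k = z \<or> zs ! k = (\<lambda>w. - z w)) \<and>
      (\<forall>w. y w = x w + (\<Sum>k<length zs. (zs ! k) w)) \<and>
      (\<forall>h\<le>length zs. \<forall>w. x w + (\<Sum>k<h. (zs ! k) w) \<ge> 0)"
    by (rule reachable_imp_walk)
qed

end
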